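(* Let $B$ be a finite brace. Then $B$ is a one-generator brace (i.e. $B=B(x)$ for some $x\in B$) if and only if $B$ has a transitive cycle base $X$ such that $X$ is a one-generator cycle set.
   Context: A brace is a triple $(B,+,\circ)$ with $(B,+)$ an abelian group, $(B,\circ)$ a group, and $a\circ(b+c)=a\circ b-a+a\circ c$; $\lambda_a(b):=-a+a\circ b$, $a^-$ is the inverse of $a$ in $(B,\circ)$. $B$ is a cycle set via $a\cdot b:=\lambda_{a^-}(b)$. $B(x)$ is the smallest subset of $B$ containing $x$ that is a subgroup of both $(B,+)$ and $(B,\circ)$. A cycle set is a non-empty set with operation $\cdot$ such that each $y\mapsto x\cdot y$ is bijective and $(x\cdot y)\cdot(x\cdot z)=(y\cdot x)\cdot(y\cdot z)$; a sub-cycle set is a subset that is a cycle set under the restricted operation; $\langle x\rangle$ is the smallest sub-cycle set containing $x$, and a cycle set $X$ is one-generator if $X=\langle x\rangle$ for some $x\in X$. A transitive cycle base of $B$ is a subset that is a single orbit of the group generated by $\{\lambda_a:a\in B\}$ and generates $(B,+)$; it is a sub-cycle set of $B$ with the induced operation. *)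

theory Defs
  imports "HOL-Algebra.Algebra"
begin

definition addG :: "'a set \<Rightarrow> ('a \<Rightarrow> 'a \<Rightarrow> 'a) \<Rightarrow> 'a monoid" where
  "addG B p = \<lparr>carrier = B, monoid.mult = p,
     monoid.one = (THE e. e \<in> B \<and> (\<forall>x\<in>B. p e x = x \<and> p x e = x))\<rparr>"

definition mulG :: "'a set \<Rightarrow> ('a \<Rightarrow> 'a \<Rightarrow> 'a) \<Rightarrow> 'a monoid" where
  "mulG B c = \<lparr>carrier = B, monoid.mult = c,
     monoid.one = (THE e. e \<in> B \<and> (\<forall>x\<in>B. c e x = x \<and> c x e = x))\<rparr>"

definition brace :: "'a set \<Rightarrow> ('a \<Rightarrow> 'a \<Rightarrow> 'a) \<Rightarrow> ('a \<Rightarrow> 'a \<Rightarrow> 'a) \<Rightarrow> bool" where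
  "brace B p c \<longleftrightarrow> comm_group (addG B p) \<and> group (mulG B c) \<and>
     (\<forall>a\<in>B. \<forall>b\<in>B. \<forall>x\<in>B.
        c a (p b x) = p (p (c a b) (inv\<^bsub>addG B p\<^esub> a)) (c a x))"

definition blam :: "'a set \<Rightarrow> ('a \<Rightarrow> 'a \<Rightarrow> 'a) \<Rightarrow> ('a \<Rightarrow> 'a \<Rightarrow> 'a) \<Rightarrow> 'a \<Rightarrow> 'a \<Rightarrow> 'a" where
  "blam B p c a b = p (inv\<^bsub>addG B p\<^esub> a) (c a b)"

definition bdot :: "'a set \<Rightarrow> ('a \<Rightarrow> 'a \<Rightarrow> 'a) \<Rightarrow> ('a \<Rightarrow> 'a \<Rightarrow> 'a) \<Rightarrow> 'a \<Rightarrow> 'a \<Rightarrow> 'a" where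
  "bdot B p c a b = blam B p c (inv\<^bsub>mulG B c\<^esub> a) b"

definition brace_gen :: "'a set \<Rightarrow> ('a \<Rightarrow> 'a \<Rightarrow> 'a) \<Rightarrow> ('a \<Rightarrow> 'a \<Rightarrow> 'a) \<Rightarrow> 'a \<Rightarrow> 'a set" where
  "brace_gen B p c x = \<Inter>{S. x \<in> S \<and> subgroup S (addG B p) \<and> subgroup S (mulG B c)}"

definition one_generator_brace :: "'a set \<Rightarrow> ('a \<Rightarrow> 'a \<Rightarrow> 'a) \<Rightarrow> ('a \<Rightarrow> 'a \<Rightarrow> 'a) \<Rightarrow> bool" where
  "one_generator_brace B p c \<longleftrightarrow> (\<exists>x\<in>B. brace_gen B p c x = B)"

definition cycle_set :: "'a set \<Rightarrow> ('a \<Rightarrow> 'a \<Rightarrow> 'a) \<Rightarrow> bool" where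
  "cycle_set Cs dd \<longleftrightarrow> Cs \<noteq> {} \<and> (\<forall>x\<in>Cs. \<forall>y\<in>Cs. dd x y \<in> Cs) \<and>
     (\<forall>x\<in>Cs. bij_betw (dd x) Cs Cs) \<and>
     (\<forall>x\<in>Cs. \<forall>y\<in>Cs. \<forall>z\<in>Cs. dd (dd x y) (dd x z) = dd (dd y x) (dd y z))"

definition sub_cycle_set :: "'a set \<Rightarrow> ('a \<Rightarrow> 'a \<Rightarrow> 'a) \<Rightarrow> 'a set \<Rightarrow> bool" where
  "sub_cycle_set Cs dd Ds \<longleftrightarrow> Ds \<subseteq> Cs \<and> cycle_set Ds dd"

definition cs_gen :: "'a set \<Rightarrow> ('a \<Rightarrow> 'a \<Rightarrow> 'a) \<Rightarrow> 'a \<Rightarrow> 'a set" where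
  "cs_gen Cs dd x = \<Inter>{Ds. x \<in> Ds \<and> sub_cycle_set Cs dd Ds}"

definition one_generator_cycle_set :: "'a set \<Rightarrow> ('a \<Rightarrow> 'a \<Rightarrow> 'a) \<Rightarrow> bool" where
  "one_generator_cycle_set Cs dd \<longleftrightarrow> cycle_set Cs dd \<and> (\<exists>x\<in>Cs. cs_gen Cs dd x = Cs)"

text \<open>Orbit of x under the group generated by the permutations lambda_a of B
  (closure under all lambda_a and their inverses).\<close>
definition lam_orbit :: "'a set \<Rightarrow> ('a \<Rightarrow> 'a \<Rightarrow> 'a) \<Rightarrow> ('a \<Rightarrow> 'a \<Rightarrow> 'a) \<Rightarrow> 'a \<Rightarrow> 'a set" where
  "lam_orbit B p c x =
     (let R = {(u, blam B p c a u) | a u. a \<in> B \<and> u \<in> B} in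
      {y. (x, y) \<in> (R \<union> R\<inverse>)\<^sup>*})"

definition transitive_cycle_base :: "'a set \<Rightarrow> ('a \<Rightarrow> 'a \<Rightarrow> 'a) \<Rightarrow> ('a \<Rightarrow> 'a \<Rightarrow> 'a) \<Rightarrow> 'a set \<Rightarrow> bool" where
  "transitive_cycle_base B p c Cs \<longleftrightarrow> Cs \<subseteq> B \<and>
     (\<exists>x\<in>Cs. Cs = lam_orbit B p c x) \<and> generate (addG B p) Cs = B"

end

theory Submission imports Defs begin

(*
  Write \<lambda>\<^sub>a b = -a + a \<circ> b, so that a \<circ> b = a + \<lambda>\<^sub>a b and a \<mapsto> \<lambda>\<^sub>a is a homomorphism from
  (B, \<circ>) to Aut (B, +). Hence an additive subgroup closed under all \<lambda>\<^sub>a is closed under \<circ>,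
  and, B being finite, is a subgroup of both groups.

  If B = B(x), the \<lambda>-orbit X of x spans such a subgroup containing x, so X is a transitive
  cycle base. If Y \<subseteq> X is a sub-cycle set containing x, its stabilizer
  H = {a. \<lambda>\<^sub>a Y \<subseteq> Y} is a subgroup of (B, \<circ>) containing the inverses y\<^sup>- (since
  \<lambda>\<^bsub>y\<^sup>-\<^esub> = y \<cdot> _), hence Y; from s + y = s \<circ> \<lambda>\<^bsub>s\<^sup>-\<^esub> y it contains all sums of elements of Y.
  These sums form a \<lambda>\<^sub>H-invariant additive subgroup containing x, hence are all of B; so
  H = B, Y is \<lambda>-invariant and Y = X.

  Conversely, if X is a transitive cycle base generated as a cycle set by x, then for every
  subgroup S of both groups containing x, S \<inter> X is a sub-cycle set containing x, so X \<subseteq> S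
  and B = span X \<subseteq> S.
*)

lemma (in group) finite_submonoid_is_subgroup:
  assumes sub: "submonoid H G" and fin: "finite H"
  shows "subgroup H G"
proof (rule submonoid_subgroupI[OF sub])
  interpret H: submonoid H G by (rule sub)
  fix a assume a: "a \<in> H"
  have "(\<lambda>x. a \<otimes> x) ` H = H"
  proof (rule endo_inj_surj[OF fin])
    show "(\<lambda>x. a \<otimes> x) ` H \<subseteq> H" using a by blast
    show "inj_on (\<lambda>x. a \<otimes> x) H" using a by (intro inj_onI) (meson l_cancel H.mem_carrier)
  qed
  then obtain y where y: "y \<in> H" "a \<otimes> y = \<one>" using H.one_closed by (metis imageE)
  then have "inv a = y" using a by (metis H.mem_carrier inv_equality l_inv_ex r_inv r_one)
  with y show "inv a \<in> H" by simp
qed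

lemma cs_gen_eq_self_iff:
  assumes "x \<in> Cs" and "cycle_set Cs dd"
  shows "cs_gen Cs dd x = Cs \<longleftrightarrow> (\<forall>Ds. x \<in> Ds \<longrightarrow> sub_cycle_set Cs dd Ds \<longrightarrow> Cs \<subseteq> Ds)"
proof -
  have "Cs \<in> {Ds. x \<in> Ds \<and> sub_cycle_set Cs dd Ds}" using assms by (simp add: sub_cycle_set_def)
  then show ?thesis unfolding cs_gen_def by blast
qed

locale brace_structure =
  fixes B :: "'a set" and p c :: "'a \<Rightarrow> 'a \<Rightarrow> 'a"
  assumes brace: "brace B p c"
begin

sublocale A: comm_group "addG B p" using brace by (simp add: brace_def)
sublocale M: group "mulG B c" using brace by (simp add: brace_def)

lemma carrier_addG [simp]: "carrier (addG B p) = B" by (simp add: addG_def)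
lemma carrier_mulG [simp]: "carrier (mulG B c) = B" by (simp add: mulG_def)
lemma mult_addG [simp]: "x \<otimes>\<^bsub>addG B p\<^esub> y = p x y" by (simp add: addG_def)
lemma mult_mulG [simp]: "x \<otimes>\<^bsub>mulG B c\<^esub> y = c x y" by (simp add: mulG_def)

abbreviation zero where "zero \<equiv> \<one>\<^bsub>addG B p\<^esub>"
abbreviation neg where "neg x \<equiv> inv\<^bsub>addG B p\<^esub> x"
abbreviation minv where "minv x \<equiv> inv\<^bsub>mulG B c\<^esub> x"
abbreviation lam where "lam \<equiv> blam B p c"
abbreviation dot where "dot \<equiv> bdot B p c"

lemma add_closed [simp]: "a \<in> B \<Longrightarrow> b \<in> B \<Longrightarrow> p a b \<in> B"
  using A.m_closed by simp
lemma mult_closed [simp]: "a \<in> B \<Longrightarrow> b \<in> B \<Longrightarrow> c a b \<in> B"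
  using M.m_closed by simp
lemma zero_closed [simp]: "zero \<in> B"
  using A.one_closed by simp
lemma neg_closed [simp]: "a \<in> B \<Longrightarrow> neg a \<in> B"
  using A.inv_closed by simp
lemma minv_closed [simp]: "a \<in> B \<Longrightarrow> minv a \<in> B"
  using M.inv_closed by simp

lemma add_zero [simp]: "x \<in> B \<Longrightarrow> p zero x = x" "x \<in> B \<Longrightarrow> p x zero = x"
  using A.l_one A.r_one by simp_all
lemma add_neg [simp]: "x \<in> B \<Longrightarrow> p (neg x) x = zero" "x \<in> B \<Longrightarrow> p x (neg x) = zero"
  using A.l_inv A.r_inv by simp_all
lemma add_neg_cancel [simp]:
  "x \<in> B \<Longrightarrow> y \<in> B \<Longrightarrow> p x (p (neg x) y) = y"
  "x \<in> B \<Longrightarrow> y \<in> B \<Longrightarrow> p (neg x) (p x y) = y"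
  using A.m_assoc[symmetric] by simp_all
lemma add_assoc: "x \<in> B \<Longrightarrow> y \<in> B \<Longrightarrow> w \<in> B \<Longrightarrow> p (p x y) w = p x (p y w)"
  using A.m_assoc by simp
lemma add_commute: "x \<in> B \<Longrightarrow> y \<in> B \<Longrightarrow> p x y = p y x"
  using A.m_comm by simp
lemma add_left_commute: "x \<in> B \<Longrightarrow> y \<in> B \<Longrightarrow> w \<in> B \<Longrightarrow> p x (p y w) = p y (p x w)"
  using A.m_lcomm by simp
lemma mult_assoc: "x \<in> B \<Longrightarrow> y \<in> B \<Longrightarrow> w \<in> B \<Longrightarrow> c (c x y) w = c x (c y w)"
  using M.m_assoc by simp

lemma left_distrib:
  "a \<in> B \<Longrightarrow> b \<in> B \<Longrightarrow> x \<in> B \<Longrightarrow> c a (p b x) = p (p (c a b) (neg a)) (c a x)"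
  using brace by (simp add: brace_def)

lemma mult_zero_right [simp]:
  assumes "a \<in> B" shows "c a zero = a"
proof -
  have "c a zero = p (p (c a zero) (neg a)) (c a zero)"
    using left_distrib[of a zero zero] assms by simp
  then have "p (c a zero) (neg a) = zero"
    using assms A.r_cancel_one[of "c a zero" "p (c a zero) (neg a)"] by simp
  then show ?thesis
    using assms add_assoc[of "c a zero" "neg a" a] by simp
qed

lemma one_mulG_eq_zero [simp]: "\<one>\<^bsub>mulG B c\<^esub> = zero"
proof -
  have "c \<one>\<^bsub>mulG B c\<^esub> zero = \<one>\<^bsub>mulG B c\<^esub>"
    using M.one_closed by simp
  moreover have "c \<one>\<^bsub>mulG B c\<^esub> zero = zero"
    using M.l_one[of zero] by simp
  ultimately show ?thesis by simp
qed

lemma mult_zero_left [simp]: "x \<in> B \<Longrightarrow> c zero x = x"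
  using M.l_one[of x] by simp

lemma mult_minv [simp]: "x \<in> B \<Longrightarrow> c (minv x) x = zero" "x \<in> B \<Longrightarrow> c x (minv x) = zero"
  using M.l_inv[of x] M.r_inv[of x] by simp_all

lemma lam_eq: "lam a b = p (neg a) (c a b)"
  by (simp add: blam_def)

lemma lam_closed [simp]: "a \<in> B \<Longrightarrow> b \<in> B \<Longrightarrow> lam a b \<in> B"
  by (simp add: lam_eq)

lemma mult_eq_add_lam: "a \<in> B \<Longrightarrow> b \<in> B \<Longrightarrow> c a b = p a (lam a b)"
  by (simp add: lam_eq)

lemma lam_add: "a \<in> B \<Longrightarrow> b \<in> B \<Longrightarrow> d \<in> B \<Longrightarrow> lam a (p b d) = p (lam a b) (lam a d)"
  by (simp add: lam_eq left_distrib add_assoc add_commute add_left_commute)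

lemma lam_zero_left [simp]: "d \<in> B \<Longrightarrow> lam zero d = d"
  by (simp add: lam_eq)

lemma lam_zero_right [simp]: "a \<in> B \<Longrightarrow> lam a zero = zero"
  by (simp add: lam_eq)

lemma lam_mult:
  assumes "a \<in> B" "b \<in> B" "d \<in> B"
  shows "lam (c a b) d = lam a (lam b d)"
proof -
  have "c (c a b) d = c a (p b (lam b d))"
    using assms by (simp add: mult_assoc mult_eq_add_lam[of b d])
  also have "\<dots> = p (p (c a b) (neg a)) (p a (lam a (lam b d)))"
    using assms by (simp add: left_distrib mult_eq_add_lam[of a "lam b d"])
  also have "\<dots> = p (c a b) (lam a (lam b d))"
    using assms by (simp add: add_assoc add_left_commute[of a "c a b"])
  finally show ?thesis
    using assms by (simp add: lam_eq add_assoc[symmetric])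
qed

lemma lam_minv_cancel [simp]:
  "a \<in> B \<Longrightarrow> d \<in> B \<Longrightarrow> lam a (lam (minv a) d) = d"
  "a \<in> B \<Longrightarrow> d \<in> B \<Longrightarrow> lam (minv a) (lam a d) = d"
  using lam_mult[of a "minv a" d] lam_mult[of "minv a" a d] by simp_all

lemma lam_inj_on: "a \<in> B \<Longrightarrow> inj_on (lam a) B"
  by (metis inj_onI lam_minv_cancel(2))

lemma lam_neg:
  assumes "a \<in> B" "b \<in> B"
  shows "lam a (neg b) = neg (lam a b)"
  using assms lam_add[of a b "neg b"] A.inv_equality[of "lam a (neg b)" "lam a b"]
  by (simp add: add_commute)

lemma dot_eq: "dot a = lam (minv a)"
  by (simp add: bdot_def fun_eq_iff)

lemma dot_dot:
  assumes "x \<in> B" "y \<in> B" "w \<in> B"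
  shows "dot (dot x y) (dot x w) = lam (minv (p x y)) w"
proof -
  have "c x (dot x y) = p x y"
    using assms by (simp add: dot_eq mult_eq_add_lam)
  then have "minv (p x y) = c (minv (dot x y)) (minv x)"
    using assms M.inv_mult_group[of x "dot x y"] by (simp add: dot_eq)
  then show ?thesis
    using assms by (simp add: dot_eq lam_mult)
qed

lemma dot_cycle_identity:
  "x \<in> B \<Longrightarrow> y \<in> B \<Longrightarrow> w \<in> B \<Longrightarrow> dot (dot x y) (dot x w) = dot (dot y x) (dot y w)"
  using dot_dot[of x y w] dot_dot[of y x w] by (simp add: add_commute)

abbreviation lam_rel where "lam_rel \<equiv> {(u, lam a u) | a u. a \<in> B \<and> u \<in> B}"

lemma mem_lam_orbit_iff: "y \<in> lam_orbit B p c x \<longleftrightarrow> (x, y) \<in> (lam_rel \<union> lam_rel\<inverse>)\<^sup>*"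
  by (simp add: lam_orbit_def Let_def)

lemma lam_orbit_self: "x \<in> lam_orbit B p c x"
  by (simp add: mem_lam_orbit_iff)

lemma lam_orbit_subset:
  assumes "x \<in> B" shows "lam_orbit B p c x \<subseteq> B"
proof
  fix y assume "y \<in> lam_orbit B p c x"
  then have "(x, y) \<in> (lam_rel \<union> lam_rel\<inverse>)\<^sup>*" by (simp add: mem_lam_orbit_iff)
  then show "y \<in> B" by (induct rule: rtrancl_induct) (use assms in auto)
qed

lemma lam_orbit_lam_closed:
  assumes "y \<in> lam_orbit B p c x" "a \<in> B" "y \<in> B"
  shows "lam a y \<in> lam_orbit B p c x"
proof -
  have "(y, lam a y) \<in> lam_rel \<union> lam_rel\<inverse>" using assms by blast
  with assms(1) show ?thesis
    unfolding mem_lam_orbit_iff by (rule rtrancl_into_rtrancl)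
qed

lemma lam_orbit_least:
  assumes "Ds \<subseteq> B" "x \<in> Ds" and lam_closed: "\<And>a. a \<in> B \<Longrightarrow> lam a ` Ds \<subseteq> Ds"
  shows "lam_orbit B p c x \<subseteq> Ds"
proof
  fix y assume "y \<in> lam_orbit B p c x"
  then have "(x, y) \<in> (lam_rel \<union> lam_rel\<inverse>)\<^sup>*" by (simp add: mem_lam_orbit_iff)
  then show "y \<in> Ds"
  proof (induct rule: rtrancl_induct)
    case base
    then show ?case using assms by simp
  next
    case (step u v)
    from step(2) consider a where "a \<in> B" "v = lam a u" | a where "a \<in> B" "v \<in> B" "u = lam a v"
      by blast
    then show ?case
    proof cases
      case 1
      then show ?thesis using step(3) lam_closed by blast
    next
      case 2
      then have "v = lam (minv a) u" by simp
      then show ?thesis using step(3) lam_closed[OF minv_closed[OF 2(1)]] by blast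
    qed
  qed
qed

lemma brace_gen_eq_carrier_iff:
  assumes "x \<in> B"
  shows "brace_gen B p c x = B \<longleftrightarrow>
    (\<forall>S. x \<in> S \<longrightarrow> subgroup S (addG B p) \<longrightarrow> subgroup S (mulG B c) \<longrightarrow> B \<subseteq> S)"
proof -
  have "B \<in> {S. x \<in> S \<and> subgroup S (addG B p) \<and> subgroup S (mulG B c)}"
    using assms A.subgroup_self M.subgroup_self by simp
  then show ?thesis unfolding brace_gen_def by blast
qed

lemma generate_lam_closed:
  assumes Ds: "Ds \<subseteq> B" and lam_closed: "\<And>a y. a \<in> B \<Longrightarrow> y \<in> Ds \<Longrightarrow> lam a y \<in> Ds"
    and a: "a \<in> B" and g: "g \<in> generate (addG B p) Ds"
  shows "lam a g \<in> generate (addG B p) Ds"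
  using g
proof (induct rule: generate.induct)
  case one
  then show ?case using a generate.one[of "addG B p" Ds] by simp
next
  case (incl h)
  then show ?case using generate.incl[OF lam_closed[OF a]] by blast
next
  case (inv h)
  then have "neg (lam a h) \<in> generate (addG B p) Ds"
    using generate.inv[OF lam_closed[OF a]] by blast
  moreover have "h \<in> B" using inv Ds by blast
  ultimately show ?case using a by (simp add: lam_neg)
next
  case (eng h1 h2)
  have "generate (addG B p) Ds \<subseteq> B" using A.generate_incl[of Ds] Ds by simp
  then have "h1 \<in> B" "h2 \<in> B" using eng by auto
  then show ?case using generate.eng[OF eng(2) eng(4)] a by (simp add: lam_add)
qed

definition lam_stabilizer :: "'a set \<Rightarrow> 'a set" where
  "lam_stabilizer Ds = {a \<in> B. lam a ` Ds \<subseteq> Ds}"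

text \<open>Sums without negatives: the stabilizer argument below handles s + y but not -y.\<close>
inductive_set sums_of :: "'a set \<Rightarrow> 'a set" for Ds where
  zero: "zero \<in> sums_of Ds"
| add: "s \<in> sums_of Ds \<Longrightarrow> y \<in> Ds \<Longrightarrow> p s y \<in> sums_of Ds"

lemma sums_of_subset: "Ds \<subseteq> B \<Longrightarrow> sums_of Ds \<subseteq> B"
proof
  show "s \<in> B" if "Ds \<subseteq> B" "s \<in> sums_of Ds" for s
    using that(2) by induct (use that(1) in auto)
qed

lemma sums_of_add_closed:
  assumes Ds: "Ds \<subseteq> B" and s: "s \<in> sums_of Ds" and t: "t \<in> sums_of Ds"
  shows "p s t \<in> sums_of Ds"
  using t
proof induct
  case zero
  then show ?case using s sums_of_subset[OF Ds] by auto
next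
  case (add t y)
  have "s \<in> B" "t \<in> B" "y \<in> B" using s add(1) add(3) Ds sums_of_subset[OF Ds] by auto
  then have "p s (p t y) = p (p s t) y" by (simp add: add_assoc)
  then show ?case using sums_of.add[OF add(2) add(3)] by simp
qed

lemma sums_of_lam_closed:
  assumes Ds: "Ds \<subseteq> B" and a: "a \<in> lam_stabilizer Ds" and t: "t \<in> sums_of Ds"
  shows "lam a t \<in> sums_of Ds"
  using t
proof induct
  case zero
  then show ?case using a by (simp add: lam_stabilizer_def sums_of.zero)
next
  case (add t y)
  have "lam a y \<in> Ds" using a add(3) by (auto simp: lam_stabilizer_def)
  then have "p (lam a t) (lam a y) \<in> sums_of Ds" using sums_of.add[OF add(2)] by blast
  moreover have "a \<in> B" "t \<in> B" "y \<in> B"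
    using a add(1) add(3) Ds sums_of_subset[OF Ds] by (auto simp: lam_stabilizer_def)
  ultimately show ?case by (simp add: lam_add)
qed

lemma sums_of_submonoid: "Ds \<subseteq> B \<Longrightarrow> submonoid (sums_of Ds) (addG B p)"
  by (rule submonoid.intro) (auto simp: sums_of_subset sums_of_add_closed sums_of.zero)

end

locale finite_brace = brace_structure +
  assumes finite_carrier: "finite B"
begin

lemma finite_subset_carrier: "Ds \<subseteq> B \<Longrightarrow> finite Ds"
  using finite_carrier finite_subset by blast

lemma cycle_set_if_dot_closed:
  assumes Ds: "Ds \<subseteq> B" "Ds \<noteq> {}" and dot_closed: "\<And>a b. a \<in> Ds \<Longrightarrow> b \<in> Ds \<Longrightarrow> dot a b \<in> Ds"
  shows "cycle_set Ds dot"
  unfolding cycle_set_def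
proof (intro conjI ballI)
  show "Ds \<noteq> {}" by fact
  show "dot x y \<in> Ds" if "x \<in> Ds" "y \<in> Ds" for x y
    using dot_closed that .
  show "dot (dot x y) (dot x w) = dot (dot y x) (dot y w)" if "x \<in> Ds" "y \<in> Ds" "w \<in> Ds" for x y w
    using dot_cycle_identity that Ds by blast
  fix x assume x: "x \<in> Ds"
  have "inj_on (lam (minv x)) B"
    using x Ds by (simp add: lam_inj_on subset_iff)
  then have "inj_on (dot x) Ds"
    using Ds(1) by (simp add: dot_eq inj_on_subset)
  moreover have "dot x ` Ds = Ds"
    using endo_inj_surj[OF finite_subset_carrier[OF Ds(1)]] calculation dot_closed x by blast
  ultimately show "bij_betw (dot x) Ds Ds" by (simp add: bij_betw_def)
qed

lemma mulG_subgroup_if_lam_closed: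
  assumes S: "submonoid S (addG B p)" and lam_closed: "\<And>a b. a \<in> S \<Longrightarrow> b \<in> S \<Longrightarrow> lam a b \<in> S"
  shows "subgroup S (mulG B c)"
proof (rule M.finite_submonoid_is_subgroup)
  interpret S: submonoid S "addG B p" by (rule S)
  have SB: "S \<subseteq> B" using S.subset by simp
  then show "finite S" by (rule finite_subset_carrier)
  show "submonoid S (mulG B c)"
  proof
    show "S \<subseteq> carrier (mulG B c)" using SB by simp
    show "\<one>\<^bsub>mulG B c\<^esub> \<in> S" using S.one_closed by simp
    show "x \<otimes>\<^bsub>mulG B c\<^esub> y \<in> S" if "x \<in> S" "y \<in> S" for x y
      using that SB S.m_closed lam_closed by (auto simp: mult_eq_add_lam subset_iff)
  qed
qed

lemma lam_stabilizer_subgroup: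
  assumes Ds: "Ds \<subseteq> B"
  shows "subgroup (lam_stabilizer Ds) (mulG B c)"
proof (rule M.finite_submonoid_is_subgroup)
  show "finite (lam_stabilizer Ds)"
    by (rule finite_subset_carrier) (auto simp: lam_stabilizer_def)
  show "submonoid (lam_stabilizer Ds) (mulG B c)"
  proof
    show "lam_stabilizer Ds \<subseteq> carrier (mulG B c)" by (auto simp: lam_stabilizer_def)
    show "\<one>\<^bsub>mulG B c\<^esub> \<in> lam_stabilizer Ds"
      using Ds by (auto simp: lam_stabilizer_def subset_iff)
    show "a \<otimes>\<^bsub>mulG B c\<^esub> b \<in> lam_stabilizer Ds"
      if "a \<in> lam_stabilizer Ds" "b \<in> lam_stabilizer Ds" for a b
    proof -
      have "a \<in> B" "b \<in> B" "lam a ` Ds \<subseteq> Ds" "lam b ` Ds \<subseteq> Ds"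
        using that by (auto simp: lam_stabilizer_def)
      moreover have "lam (c a b) y = lam a (lam b y)" if "y \<in> Ds" for y
        using that Ds calculation(1,2) by (auto simp: lam_mult)
      ultimately show ?thesis by (auto simp: lam_stabilizer_def)
    qed
  qed
qed

lemma cycle_set_subset_lam_stabilizer:
  assumes Ds: "Ds \<subseteq> B" and cyc: "cycle_set Ds dot"
  shows "Ds \<subseteq> lam_stabilizer Ds"
proof
  fix y assume y: "y \<in> Ds"
  have "minv y \<in> lam_stabilizer Ds"
    using y cyc Ds unfolding lam_stabilizer_def cycle_set_def by (auto simp: dot_eq)
  then have "minv (minv y) \<in> lam_stabilizer Ds"
    using subgroup.m_inv_closed[OF lam_stabilizer_subgroup[OF Ds]] by simp
  then show "y \<in> lam_stabilizer Ds" using y Ds M.inv_inv[of y] by auto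
qed

lemma sums_of_subset_lam_stabilizer:
  assumes Ds: "Ds \<subseteq> B" and Ds_stab: "Ds \<subseteq> lam_stabilizer Ds"
  shows "sums_of Ds \<subseteq> lam_stabilizer Ds"
proof
  interpret H: subgroup "lam_stabilizer Ds" "mulG B c" by (rule lam_stabilizer_subgroup[OF Ds])
  fix s assume "s \<in> sums_of Ds"
  then show "s \<in> lam_stabilizer Ds"
  proof induct
    case zero
    then show ?case using H.one_closed by simp
  next
    case (add s y)
    have sy: "s \<in> B" "y \<in> B" using add Ds H.subset by auto
    have "lam (minv s) y \<in> Ds"
      using H.m_inv_closed[OF add(2)] add(3) by (auto simp: lam_stabilizer_def)
    then have "c s (lam (minv s) y) \<in> lam_stabilizer Ds"
      using H.m_closed[OF add(2)] Ds_stab by auto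
    then show ?case using sy by (simp add: mult_eq_add_lam)
  qed
qed

lemma lam_stabilizer_eq_carrier:
  assumes gen: "brace_gen B p c x = B" and Ds: "Ds \<subseteq> B" "cycle_set Ds dot" "x \<in> Ds"
  shows "lam_stabilizer Ds = B"
proof -
  let ?S = "sums_of Ds"
  have S_stab: "?S \<subseteq> lam_stabilizer Ds"
    using sums_of_subset_lam_stabilizer cycle_set_subset_lam_stabilizer Ds by blast
  have "subgroup ?S (addG B p)"
    using A.finite_submonoid_is_subgroup sums_of_submonoid finite_subset_carrier sums_of_subset Ds
    by blast
  moreover have "subgroup ?S (mulG B c)"
    using mulG_subgroup_if_lam_closed sums_of_submonoid sums_of_lam_closed S_stab Ds by blast
  moreover have "x \<in> ?S"
    using sums_of.add[OF sums_of.zero \<open>x \<in> Ds\<close>] Ds by auto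
  ultimately have "B \<subseteq> ?S"
    using gen brace_gen_eq_carrier_iff Ds by blast
  then show ?thesis using S_stab by (auto simp: lam_stabilizer_def)
qed

lemma lam_orbit_cycle_set:
  assumes x: "x \<in> B"
  shows "cycle_set (lam_orbit B p c x) dot"
proof (rule cycle_set_if_dot_closed)
  show "lam_orbit B p c x \<subseteq> B" using x by (rule lam_orbit_subset)
  show "lam_orbit B p c x \<noteq> {}" using lam_orbit_self by blast
  fix a b assume "a \<in> lam_orbit B p c x" "b \<in> lam_orbit B p c x"
  moreover have "a \<in> B" "b \<in> B" using calculation lam_orbit_subset[OF x] by auto
  ultimately show "dot a b \<in> lam_orbit B p c x"
    by (simp add: dot_eq lam_orbit_lam_closed)
qed

lemma one_generator_brace_imp_cycle_base:
  assumes "one_generator_brace B p c"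
  shows "\<exists>Cs. transitive_cycle_base B p c Cs \<and> one_generator_cycle_set Cs dot"
proof -
  obtain x where x: "x \<in> B" and gen: "brace_gen B p c x = B"
    using assms by (auto simp: one_generator_brace_def)
  define Cs where "Cs = lam_orbit B p c x"
  have Cs: "Cs \<subseteq> B" "x \<in> Cs" "cycle_set Cs dot"
    unfolding Cs_def using x lam_orbit_subset lam_orbit_self lam_orbit_cycle_set by auto
  have lam_closed: "lam a y \<in> Cs" if "a \<in> B" "y \<in> Cs" for a y
    using that Cs(1) lam_orbit_lam_closed unfolding Cs_def by blast
  let ?G = "generate (addG B p) Cs"
  have G: "?G \<subseteq> B" using A.generate_incl[of Cs] Cs(1) by simp
  have "subgroup ?G (addG B p)" using A.generate_is_subgroup[of Cs] Cs(1) by simp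
  moreover have "subgroup ?G (mulG B c)"
    using mulG_subgroup_if_lam_closed[OF subgroup_is_submonoid[OF calculation]]
      generate_lam_closed[OF Cs(1) lam_closed] G by blast
  moreover have "x \<in> ?G" using Cs(2) by (rule generate.incl)
  ultimately have "?G = B" using gen x G brace_gen_eq_carrier_iff by blast
  moreover have "cs_gen Cs dot x = Cs"
    unfolding cs_gen_eq_self_iff[OF Cs(2,3)]
  proof (intro allI impI)
    fix Ds assume x_Ds: "x \<in> Ds" and "sub_cycle_set Cs dot Ds"
    then have Ds: "Ds \<subseteq> B" "cycle_set Ds dot" using Cs(1) by (auto simp: sub_cycle_set_def)
    then have "lam_stabilizer Ds = B" using gen x_Ds by (simp add: lam_stabilizer_eq_carrier)
    then show "Cs \<subseteq> Ds"
      unfolding Cs_def using lam_orbit_least[OF Ds(1) x_Ds] by (auto simp: lam_stabilizer_def)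
  qed
  ultimately show ?thesis
    unfolding transitive_cycle_base_def one_generator_cycle_set_def using Cs Cs_def by blast
qed

lemma cycle_base_imp_one_generator_brace:
  assumes base: "transitive_cycle_base B p c Cs" and gen: "one_generator_cycle_set Cs dot"
  shows "one_generator_brace B p c"
proof -
  obtain x0 where Cs: "Cs \<subseteq> B" "Cs = lam_orbit B p c x0" and span: "generate (addG B p) Cs = B"
    using base by (auto simp: transitive_cycle_base_def)
  obtain x where x: "x \<in> Cs" and cyc: "cycle_set Cs dot" and x_gen: "cs_gen Cs dot x = Cs"
    using gen by (auto simp: one_generator_cycle_set_def)
  have "B \<subseteq> S" if S: "x \<in> S" "subgroup S (addG B p)" "subgroup S (mulG B c)" for S
  proof -
    have SB: "S \<subseteq> B" using subgroup.subset[OF S(2)] by simp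
    have "dot a b \<in> S \<inter> Cs" if ab: "a \<in> S \<inter> Cs" "b \<in> S \<inter> Cs" for a b
    proof -
      have "a \<in> B" "b \<in> B" using ab Cs(1) by auto
      have "minv a \<in> S" using ab subgroup.m_inv_closed[OF S(3)] by simp
      then have "neg (minv a) \<in> S" "c (minv a) b \<in> S"
        using ab subgroup.m_inv_closed[OF S(2)] subgroup.m_closed[OF S(3)] SB by auto
      then have "dot a b \<in> S"
        using subgroup.m_closed[OF S(2)] by (simp add: dot_eq lam_eq)
      moreover have "dot a b \<in> Cs"
        using ab Cs(2) lam_orbit_lam_closed[of b x0 "minv a"] \<open>a \<in> B\<close> \<open>b \<in> B\<close> by (simp add: dot_eq)
      ultimately show ?thesis by blast
    qed
    then have "cycle_set (S \<inter> Cs) dot"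
      using Cs(1) S(1) x by (intro cycle_set_if_dot_closed) auto
    then have "Cs \<subseteq> S"
      using x_gen S(1) x unfolding cs_gen_eq_self_iff[OF x cyc] sub_cycle_set_def by blast
    then show "B \<subseteq> S"
      using A.generate_subgroup_incl[OF _ S(2)] span by blast
  qed
  then show ?thesis
    using x Cs(1) brace_gen_eq_carrier_iff by (auto simp: one_generator_brace_def)
qed

end

theorem mainTheorem8:
  fixes B :: "'a set" and p c :: "'a \<Rightarrow> 'a \<Rightarrow> 'a"
  assumes "brace B p c" and "finite B"
  shows "one_generator_brace B p c \<longleftrightarrow>
         (\<exists>Cs. transitive_cycle_base B p c Cs \<and> one_generator_cycle_set Cs (bdot B p c))"
proof -
  interpret finite_brace B p c
    using assms by unfold_locales
  show ?thesis
    using one_generator_brace_imp_cycle_base cycle_base_imp_one_generator_brace by blast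
qed

end
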